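(* Let $\mu$ be a Borel probability measure on a $d$-dimensional real Hilbert space $V$ with compact support $\Omega$, let $\eta>0$, and let $f$ be a function with $\mu(B_{\eta/2}(X))\ge \exp(-f(2/\eta,d))$ for every $X\in\Omega$. Let $A$ be in the $\eta$-interior of $\mathrm{hull}(\Omega)$. Then any $Y^\star\in V_{\mathcal L}$ minimizing $F_A$ over $V_{\mathcal L}$ satisfies $\|Y^\star\|\le 2\eta^{-1} f(2\eta^{-1},d)$. In particular, if $\mu$ is balanced (so $f$ is a polynomial), then $\|Y^\star\|\le \mathrm{poly}(\eta^{-1},d)$.
   Context: $B_r(X)$ is the open ball of radius $r$ about $X$. $F_A(Y)=\langle Y,A\rangle+\log\int_\Omega e^{-\langle Y,X\rangle}d\mu(X)$. $V_{\mathcal L}$ is the linear subspace parallel to the affine hull $\mathrm{aff}(\Omega)$. $A$ is in the $\eta$-interior of $\mathrm{hull}(\Omega)$ if $B_\eta(A)\cap \mathrm{aff}(\Omega)\subseteq \mathrm{hull}(\Omega)$. $\mu$ is balanced if there is a polynomial $f$ such that for all $\delta>0$ and $X\in\Omega$, $\mu(B_\delta(X))\ge \exp(-f(\delta^{-1},d))$. *)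

theory Defs
  imports "HOL-Analysis.Analysis" "HOL-Probability.Probability"
begin

definition measure_support :: "'a::topological_space measure \<Rightarrow> 'a set" where
  "measure_support M = {x. \<forall>U. open U \<longrightarrow> x \<in> U \<longrightarrow> emeasure M U > 0}"

definition parallel_subspace :: "'a::real_vector set \<Rightarrow> 'a set" where
  "parallel_subspace S = {x - y | x y. x \<in> affine hull S \<and> y \<in> affine hull S}"

definition eta_interior :: "real \<Rightarrow> 'a::real_normed_vector set \<Rightarrow> 'a \<Rightarrow> bool" where
  "eta_interior \<eta> \<Omega> A \<longleftrightarrow> A \<in> convex hull \<Omega> \<and> ball A \<eta> \<inter> affine hull \<Omega> \<subseteq> convex hull \<Omega>"

definition F_obj :: "'a::euclidean_space measure \<Rightarrow> 'a \<Rightarrow> 'a \<Rightarrow> real" where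
  "F_obj \<mu> A Y = inner Y A + ln (\<integral>X. exp (- inner Y X) \<partial>\<mu>)"

end

theory Submission
  imports Defs
begin

text \<open>Since \<open>F_A(0) = 0\<close>, a minimiser \<open>Y\<close> has \<open>F_A(Y) \<le> 0\<close>. Moving from \<open>A\<close> a distance
  \<open>t < \<eta>\<close> against \<open>Y\<close> stays inside \<open>hull(\<Omega>)\<close>, so some \<open>X\<^sub>0 \<in> \<Omega>\<close> has
  \<open>\<langle>Y, A - X\<^sub>0\<rangle> \<ge> t \<parallel>Y\<parallel>\<close>. On \<open>B\<^sub>\<eta>\<^sub>/\<^sub>2(X\<^sub>0)\<close> the integrand is at least
  \<open>exp(-\<langle>Y,X\<^sub>0\<rangle> - \<parallel>Y\<parallel>\<eta>/2)\<close>, and this ball has mass at least \<open>exp(-f)\<close>; hence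
  \<open>0 \<ge> F_A(Y) \<ge> t\<parallel>Y\<parallel> - \<parallel>Y\<parallel>\<eta>/2 - f\<close>, and letting \<open>t \<rightarrow> \<eta>\<close> gives the bound.\<close>

lemma measure_support_complement_null:
  fixes M :: "'a::second_countable_topology measure"
  assumes "sets M = sets borel"
  shows "- measure_support M \<in> null_sets M"
proof -
  define \<F> where "\<F> = {U::'a set. open U \<and> emeasure M U = 0}"
  have "\<Union>\<F> = - measure_support M"
    unfolding \<F>_def measure_support_def by (auto simp: not_less)
  moreover obtain \<F>' where \<F>': "\<F>' \<subseteq> \<F>" "countable \<F>'" "\<Union>\<F>' = \<Union>\<F>"
    using Lindelof[of \<F>] unfolding \<F>_def by blast
  moreover have "(\<Union>U\<in>\<F>'. U) \<in> null_sets M"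
    using \<F>' assms unfolding \<F>_def
    by (intro null_sets_UN') (auto simp: null_sets_def)
  ultimately show ?thesis by simp
qed

lemma AE_in_measure_support:
  fixes M :: "'a::second_countable_topology measure"
  assumes "sets M = sets borel"
  shows "AE x in M. x \<in> measure_support M"
  using measure_support_complement_null[OF assms] by (auto intro: AE_I')

lemma integrable_bounded_on_compact_support:
  fixes M :: "'a::euclidean_space measure" and g :: "'a \<Rightarrow> real"
  assumes "finite_measure M" "sets M = sets borel"
    and "compact (measure_support M)" "continuous_on UNIV g"
  shows "integrable M g"
proof -
  interpret finite_measure M by fact
  obtain B where B: "\<And>x. x \<in> measure_support M \<Longrightarrow> norm (g x) \<le> B"
    using compact_imp_bounded[OF compact_continuous_image[OF
          continuous_on_subset[OF assms(4)] assms(3)]]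
    by (auto simp: bounded_iff)
  have "g \<in> borel_measurable M"
    using borel_measurable_continuous_onI[OF assms(4)] measurable_cong_sets[OF assms(2) refl]
    by blast
  then show ?thesis
    using AE_in_measure_support[OF assms(2)] B
    by (intro integrable_const_bound[where B = B]) (auto elim: AE_mp)
qed

lemma F_obj_zero:
  assumes "prob_space \<mu>"
  shows "F_obj \<mu> A 0 = 0"
  using prob_space.prob_space[OF assms] by (simp add: F_obj_def)

lemma affine_hull_add_parallel:
  assumes "A \<in> affine hull S" "Y \<in> parallel_subspace S"
  shows "A + c *\<^sub>R Y \<in> affine hull S"
  using assms mem_affine_3_minus[OF affine_affine_hull]
  unfolding parallel_subspace_def by blast

lemma convex_hull_inner_ge_point:
  fixes S :: "'a::real_inner set"
  assumes "P \<in> convex hull S"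
  obtains X where "X \<in> S" "inner Y X \<le> inner Y P"
proof (rule ccontr)
  assume "\<not> thesis"
  then have "S \<subseteq> {z. inner Y P < inner Y z}"
    using that by force
  then have "convex hull S \<subseteq> {z. inner Y P < inner Y z}"
    by (intro hull_minimal) (auto simp: convex_halfspace_gt)
  then show False
    using assms by auto
qed

lemma eta_interior_inner_gap:
  fixes A Y :: "'a::euclidean_space"
  assumes "eta_interior \<eta> \<Omega> A" "Y \<in> parallel_subspace \<Omega>" "0 \<le> t" "t < \<eta>"
  obtains X where "X \<in> \<Omega>" "t * norm Y \<le> inner Y (A - X)"
proof -
  define P where "P = A + (- t / norm Y) *\<^sub>R Y"
  have A: "A \<in> convex hull \<Omega>" "ball A \<eta> \<inter> affine hull \<Omega> \<subseteq> convex hull \<Omega>"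
    using assms(1) unfolding eta_interior_def by auto
  then have "P \<in> affine hull \<Omega>"
    unfolding P_def using convex_hull_subset_affine_hull assms(2)
    by (blast intro: affine_hull_add_parallel)
  moreover have "P \<in> ball A \<eta>"
    unfolding P_def using assms(3,4) by (cases "Y = 0") (auto simp: dist_norm)
  ultimately obtain X where "X \<in> \<Omega>" "inner Y X \<le> inner Y P"
    using A(2) convex_hull_inner_ge_point by blast
  moreover have "inner Y P = inner Y A - t * norm Y"
    unfolding P_def
    by (cases "Y = 0") (simp_all add: inner_diff_right power2_norm_eq_inner[symmetric] power2_eq_square)
  ultimately show thesis
    using that by (simp add: inner_diff_right)
qed

text \<open>The integrand is at least \<open>exp(-\<langle>Y,X\<^sub>0\<rangle> - \<parallel>Y\<parallel>r)\<close> on \<open>B\<^sub>r(X\<^sub>0)\<close>, by Cauchy--Schwarz.\<close>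

lemma F_obj_lower_bound:
  fixes \<mu> :: "'a::euclidean_space measure"
  assumes "finite_measure \<mu>" "sets \<mu> = sets borel" "integrable \<mu> (\<lambda>X. exp (- inner Y X))"
    and "measure \<mu> (ball X\<^sub>0 r) \<ge> exp (- c)"
  shows "inner Y (A - X\<^sub>0) - norm Y * r - c \<le> F_obj \<mu> A Y"
proof -
  interpret finite_measure \<mu> by fact
  define g where "g = (\<lambda>X. exp (- inner Y X))"
  define m where "m = exp (- inner Y X\<^sub>0 - norm Y * r)"
  have "m * exp (- c) \<le> m * measure \<mu> (ball X\<^sub>0 r)"
    using assms(4) by (simp add: m_def)
  also have "\<dots> = (\<integral>x. m * indicator (ball X\<^sub>0 r) x \<partial>\<mu>)"
    using assms(2) by (simp add: measure_def sets_eq_imp_space_eq)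
  also have "\<dots> \<le> integral\<^sup>L \<mu> g"
  proof (rule integral_mono)
    show "integrable \<mu> (\<lambda>x. m * indicator (ball X\<^sub>0 r) x)"
      using assms(2) by (intro integrable_real_mult_indicator) (auto simp: sets_eq_imp_space_eq)
    show "integrable \<mu> g"
      using assms(3) by (simp add: g_def)
    fix x
    have "x \<in> ball X\<^sub>0 r \<Longrightarrow> inner Y (x - X\<^sub>0) \<le> norm Y * r"
      using norm_cauchy_schwarz[of Y "x - X\<^sub>0"]
            mult_left_mono[of "norm (x - X\<^sub>0)" r "norm Y"]
      by (auto simp: dist_norm norm_minus_commute)
    then show "m * indicator (ball X\<^sub>0 r) x \<le> g x"
      by (auto simp: m_def g_def inner_diff_right indicator_def)
  qed
  finally have "ln (m * exp (- c)) \<le> ln (integral\<^sup>L \<mu> g)"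
    by (intro ln_mono) (auto simp: m_def)
  then show ?thesis
    by (simp add: F_obj_def g_def m_def ln_mult inner_diff_right)
qed

theorem mainTheorem4:
  fixes \<mu> :: "'a::euclidean_space measure"
    and f :: "real \<Rightarrow> nat \<Rightarrow> real"
    and \<eta> :: real and A Ystar :: 'a
  assumes "prob_space \<mu>"
    and "sets \<mu> = sets borel"
    and "compact (measure_support \<mu>)"
    and "\<eta> > 0"
    and "\<forall>X\<in>measure_support \<mu>. measure \<mu> (ball X (\<eta>/2)) \<ge> exp (- f (2/\<eta>) DIM('a))"
    and "eta_interior \<eta> (measure_support \<mu>) A"
    and "Ystar \<in> parallel_subspace (measure_support \<mu>)"
    and "\<forall>Y\<in>parallel_subspace (measure_support \<mu>). F_obj \<mu> A Ystar \<le> F_obj \<mu> A Y"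
  shows "norm Ystar \<le> 2 / \<eta> * f (2/\<eta>) DIM('a)"
proof -
  interpret prob_space \<mu> by fact
  let ?f = "f (2/\<eta>) DIM('a)"
  have "0 \<in> parallel_subspace (measure_support \<mu>)"
    using assms(6) convex_hull_subset_affine_hull
    unfolding parallel_subspace_def eta_interior_def by force
  then have F_nonpos: "F_obj \<mu> A Ystar \<le> 0"
    using assms(8) F_obj_zero[OF assms(1)] by metis
  have integrable: "integrable \<mu> (\<lambda>X. exp (- inner Ystar X))"
    using assms(2,3) finite_measure_axioms
    by (intro integrable_bounded_on_compact_support continuous_intros) auto
  have gap: "t * norm Ystar \<le> norm Ystar * (\<eta>/2) + ?f" if t: "0 \<le> t" "t < \<eta>" for t
  proof -
    obtain X where X: "X \<in> measure_support \<mu>" "t * norm Ystar \<le> inner Ystar (A - X)"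
      using eta_interior_inner_gap[OF assms(6,7) t] by blast
    have "inner Ystar (A - X) - norm Ystar * (\<eta>/2) - ?f \<le> F_obj \<mu> A Ystar"
      using assms(5) X(1)
      by (intro F_obj_lower_bound[OF finite_measure_axioms assms(2) integrable]) auto
    then show ?thesis
      using X(2) F_nonpos by linarith
  qed
  have "\<eta> * norm Ystar \<le> norm Ystar * (\<eta>/2) + ?f"
  proof (rule field_le_mult_one_interval)
    fix z :: real
    assume "0 < z" "z < 1"
    then show "z * (\<eta> * norm Ystar) \<le> norm Ystar * (\<eta>/2) + ?f"
      using gap[of "z * \<eta>"] assms(4) by (simp add: mult.assoc)
  qed
  then show ?thesis
    using assms(4) by (simp add: field_simps)
qed

end
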